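(* Let $0<m\le L$, $\kappa=L/m$, let $\rho\in(0,1)$ satisfy $1/(1-\rho)\in[\sqrt{3\kappa+1}/2,(\kappa+1)/2]$, let $c\in[0,1/2]$ be the solution of $\kappa(1-\rho)\big(1-c\rho-c^2(1+\rho)\big)=(1+\rho)\big(1-c\rho-c^2(1-\rho)\big)$, and consider the two-step momentum algorithm with parameters $\alpha=(1+\rho)(1+c-c\rho)/(L(1+c))$, $\gamma=\beta=c\rho^2/\big((\alpha L-1)(1+c)\big)$. Then the extreme values of $\hat J$ over $[m,L]$ satisfy $$\hat J_{\max}=\hat J(m)=\frac{\sigma_w^2(1-c)^2(r\kappa+1)}{2(1-c-c\rho^2)(1+\rho)(1-c+c\rho)}\;\ge\;\hat J(L)=\frac{\sigma_w^2(1+c)^2(1+c-c\rho^2)}{(1-\rho^2)(1+c-c\rho)(1+c+c\rho)(1+c+c\rho^2)},$$ and $\hat J_{\min}=\hat J(1/\alpha)=\sigma_w^2$, where $r=\dfrac{(1+c)(1-c+c\rho)}{(1-c)(1+c-c\rho)}\in[1,3]$.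
   Context: For the two-step momentum algorithm $x^{t+2}=x^{t+1}+\beta(x^{t+1}-x^t)-\alpha\nabla f\big(x^{t+1}+\gamma(x^{t+1}-x^t)\big)+\sigma_w w^t$ applied to quadratics with Hessian eigenvalues in $[m,L]$ (white noise $w^t$ with zero mean and identity covariance, $\sigma_w\ge0$), define for $\lambda>0$: $a(\lambda)=\beta-\gamma\alpha\lambda$, $b(\lambda)=(1+\gamma)\alpha\lambda-(1+\beta)$, $d(\lambda)=a+b+1$, $l(\lambda)=a-b+1$, $h(\lambda)=1-a$, and $\hat J(\lambda)=\sigma_w^2(d(\lambda)+l(\lambda))/(2d(\lambda)h(\lambda)l(\lambda))$ (the contribution of Hessian eigenvalue $\lambda$ to the steady-state variance of $x^t-x^\star$). $\hat J_{\max}=\max_{\lambda\in[m,L]}\hat J(\lambda)$, $\hat J_{\min}=\min_{\lambda\in[m,L]}\hat J(\lambda)$. *)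

theory Defs
  imports Complex_Main
begin

text \<open>Coefficients of the characteristic polynomial of the two-step momentum
  algorithm with step size alpha, momentum beta, extrapolation gamma, at Hessian
  eigenvalue lam.\<close>

definition ca :: "real \<Rightarrow> real \<Rightarrow> real \<Rightarrow> real \<Rightarrow> real" where
  "ca alpha beta gamma lam = beta - gamma * alpha * lam"

definition cb :: "real \<Rightarrow> real \<Rightarrow> real \<Rightarrow> real \<Rightarrow> real" where
  "cb alpha beta gamma lam = (1 + gamma) * alpha * lam - (1 + beta)"

definition cd :: "real \<Rightarrow> real \<Rightarrow> real \<Rightarrow> real \<Rightarrow> real" where
  "cd alpha beta gamma lam = ca alpha beta gamma lam + cb alpha beta gamma lam + 1"

definition cl :: "real \<Rightarrow> real \<Rightarrow> real \<Rightarrow> real \<Rightarrow> real" where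
  "cl alpha beta gamma lam = ca alpha beta gamma lam - cb alpha beta gamma lam + 1"

definition ch :: "real \<Rightarrow> real \<Rightarrow> real \<Rightarrow> real \<Rightarrow> real" where
  "ch alpha beta gamma lam = 1 - ca alpha beta gamma lam"

text \<open>Contribution of eigenvalue lam to the steady-state variance.\<close>
definition Jhat :: "real \<Rightarrow> real \<Rightarrow> real \<Rightarrow> real \<Rightarrow> real \<Rightarrow> real" where
  "Jhat sigma_w alpha beta gamma lam =
     sigma_w\<^sup>2 * (cd alpha beta gamma lam + cl alpha beta gamma lam) /
     (2 * cd alpha beta gamma lam * ch alpha beta gamma lam * cl alpha beta gamma lam)"

definition Jhat_max :: "real \<Rightarrow> real \<Rightarrow> real \<Rightarrow> real \<Rightarrow> real \<Rightarrow> real \<Rightarrow> real" where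
  "Jhat_max sigma_w alpha beta gamma m L = (SUP lam\<in>{m..L}. Jhat sigma_w alpha beta gamma lam)"

definition Jhat_min :: "real \<Rightarrow> real \<Rightarrow> real \<Rightarrow> real \<Rightarrow> real \<Rightarrow> real \<Rightarrow> real" where
  "Jhat_min sigma_w alpha beta gamma m L = (INF lam\<in>{m..L}. Jhat sigma_w alpha beta gamma lam)"

end

theory Submission
  imports Defs
begin

text \<open>For gamma = beta = u/(1 - u), u = c rho (Nesterov's method), the variance contribution of the
  eigenvalue lam is sigma_w^2 (1 - u) / G(alpha lam) for the rational function G = variance_gain u.
  Its derivative has the sign of 1 - x on [0, 2/(1 + u)], so G increases up to its maximum
  G(1) = 1 - u and then decreases: Jhat is smallest, namely sigma_w^2, at lam = 1/alpha and
  largest at one of the endpoints m, L. The tuning places alpha m \<le> 1 \<le> alpha L < 2/(1 + u), and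
  the two endpoint values differ by a positive multiple of
  Q = 1 - c^2 - c^2 rho^2 - c^4 rho^2 + c^4 rho^4, which is positive for c \<le> 1/2.\<close>

text \<open>With beta = gamma = u/(1 - u) and x = alpha lam the characteristic coefficients become
  d = x, h = (1 - 2u + ux)/(1 - u) and l = (2 - (1 + u)x)/(1 - u).\<close>

definition variance_gain :: "real \<Rightarrow> real \<Rightarrow> real" where
  "variance_gain u x = x * (1 - 2*u + u*x) * (2 - (1+u)*x) / (1 - u*x)"

lemma Jhat_nesterov_eq_variance_gain:
  assumes "u \<noteq> 1" "beta = u / (1 - u)"
  shows "Jhat s alpha beta beta lam = s\<^sup>2 * (1 - u) / variance_gain u (alpha * lam)"
proof -
  define x where "x = alpha * lam"
  have u: "1 - u \<noteq> 0" using assms(1) by simp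
  have d: "cd alpha beta beta lam = x"
    by (simp add: cd_def ca_def cb_def x_def algebra_simps)
  have h: "ch alpha beta beta lam = (1 - 2*u + u*x) / (1 - u)"
    using u by (simp add: ch_def ca_def assms(2) x_def divide_simps)
  have l: "cl alpha beta beta lam = (2 - (1+u)*x) / (1 - u)"
    using u by (simp add: cl_def ca_def cb_def assms(2) x_def divide_simps) (simp add: algebra_simps)
  have dl: "cd alpha beta beta lam + cl alpha beta beta lam = 2 * (1 - u*x) / (1 - u)"
    using u unfolding d l by (simp add: field_simps)
  \<comment> \<open>no side conditions: if a factor vanishes, both sides are 0 because of division by 0\<close>
  have "s\<^sup>2 * (2*C/(1-u)) / (2*x*(A/(1-u))*(B/(1-u))) = s\<^sup>2 * (1-u) / (x*A*B/C)" for A B C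
    using u by (cases "x*A*B = 0") (auto simp: field_simps power2_eq_square)
  then show ?thesis
    unfolding Jhat_def dl unfolding d h l variance_gain_def x_def[symmetric] .
qed

lemma variance_gain_fraction:
  assumes "q \<noteq> 0"
  shows "(1 - u) / variance_gain u (p / q)
    = (1 - u) * q\<^sup>2 * (q - u*p) / (p * ((1 - 2*u)*q + u*p) * (2*q - (1 + u)*p))"
proof -
  have "1 - 2*u + u*(p/q) = ((1 - 2*u)*q + u*p) / q" "2 - (1+u)*(p/q) = (2*q - (1 + u)*p) / q"
    "1 - u*(p/q) = (q - u*p) / q"
    using assms by (simp_all add: field_simps)
  then have "variance_gain u (p / q) = p * ((1 - 2*u)*q + u*p) * (2*q - (1 + u)*p) / (q\<^sup>2 * (q - u*p))"
    using assms unfolding variance_gain_def by (simp add: power2_eq_square)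
  then show ?thesis by simp
qed

lemma variance_gain_one: "u \<noteq> 1 \<Longrightarrow> variance_gain u 1 = 1 - u"
  by (simp add: variance_gain_def)

lemma variance_gain_pos:
  assumes "0 \<le> u" "u < 1/2" "0 < x" "x < 2 / (1 + u)"
  shows "0 < variance_gain u x"
proof -
  have l: "0 < 2 - (1 + u) * x" using assms by (simp add: field_simps)
  have h: "0 < 1 - 2*u + u*x" using assms by (simp add: add_pos_nonneg)
  have "u * x \<le> 1/2 * x" using assms by (intro mult_right_mono) auto
  with l have "0 < 1 - u*x" by (simp add: algebra_simps)
  with l h show ?thesis
    using assms unfolding variance_gain_def by simp
qed

lemma has_real_derivative_variance_gain:
  assumes "u * x \<noteq> 1"
  shows "(variance_gain u has_real_derivative
     (1 - x) * (2 - 4*u + (4*u\<^sup>2 + 2*u)*x - 2*u\<^sup>2*(1 + u)*x\<^sup>2) / (1 - u*x)\<^sup>2) (at x)"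
  unfolding variance_gain_def [abs_def]
  using assms
  by (auto intro!: derivative_eq_intros simp: power2_eq_square) (simp add: algebra_simps)

lemma variance_gain_derivative_factor:
  assumes "0 \<le> u" "u < 1/2" "0 \<le> t" "t \<le> 2 / (1 + u)"
  obtains P where "0 < P" "(variance_gain u has_real_derivative (1 - t) * P) (at t)"
proof -
  have ut: "(1 + u) * t \<le> 2" using assms by (simp add: field_simps)
  then have "u\<^sup>2 * ((1 + u) * t * t) \<le> u\<^sup>2 * (2 * t)"
    using assms by (intro mult_left_mono mult_right_mono) auto
  moreover have "0 \<le> u * t" using assms by simp
  ultimately have "0 < 2 - 4*u + 2*(u*t) + 2*(u\<^sup>2*(2*t) - u\<^sup>2*((1 + u)*t*t))"
    using assms(2) by argo
  also have "\<dots> = 2 - 4*u + (4*u\<^sup>2 + 2*u)*t - 2*u\<^sup>2*(1 + u)*t\<^sup>2"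
    by (simp add: algebra_simps power2_eq_square)
  finally have E: "0 < 2 - 4*u + (4*u\<^sup>2 + 2*u)*t - 2*u\<^sup>2*(1 + u)*t\<^sup>2" .
  have "u * t \<le> 1/2 * t" using assms by (intro mult_right_mono) auto
  with ut have "u * t < 1" by (simp add: algebra_simps)
  then have "u * t \<noteq> 1" "0 < (1 - u*t)\<^sup>2" by simp_all
  with E show ?thesis
    using has_real_derivative_variance_gain[of u t]
    by (intro that[of "(2 - 4*u + (4*u\<^sup>2 + 2*u)*t - 2*u\<^sup>2*(1 + u)*t\<^sup>2) / (1 - u*t)\<^sup>2"]) simp_all
qed

lemma variance_gain_mono_below_one:
  assumes "0 \<le> u" "u < 1/2" "0 \<le> y" "y \<le> x" "x \<le> 1"
  shows "variance_gain u y \<le> variance_gain u x"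
proof (rule DERIV_nonneg_imp_nondecreasing[OF \<open>y \<le> x\<close>])
  fix t assume "y \<le> t" "t \<le> x"
  moreover have "1 \<le> 2 / (1 + u)" using assms by (simp add: field_simps)
  ultimately have "0 \<le> t" "t \<le> 2 / (1 + u)" using assms by linarith+
  then obtain P where "0 < P" "(variance_gain u has_real_derivative (1 - t) * P) (at t)"
    using assms variance_gain_derivative_factor[of u t] by auto
  with \<open>t \<le> x\<close> \<open>x \<le> 1\<close> show "\<exists>D. (variance_gain u has_real_derivative D) (at t) \<and> 0 \<le> D"
    by (intro exI[of _ "(1 - t) * P"]) simp
qed

lemma variance_gain_antimono_above_one:
  assumes "0 \<le> u" "u < 1/2" "1 \<le> y" "y \<le> x" "x \<le> 2 / (1 + u)"
  shows "variance_gain u x \<le> variance_gain u y"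
proof (rule DERIV_nonpos_imp_nonincreasing[OF \<open>y \<le> x\<close>])
  fix t assume "y \<le> t" "t \<le> x"
  then obtain P where "0 < P" "(variance_gain u has_real_derivative (1 - t) * P) (at t)"
    using assms variance_gain_derivative_factor[of u t] by auto
  with \<open>1 \<le> y\<close> \<open>y \<le> t\<close> show "\<exists>D. (variance_gain u has_real_derivative D) (at t) \<and> D \<le> 0"
    by (intro exI[of _ "(1 - t) * P"]) (simp add: mult_nonpos_nonneg)
qed

lemma variance_gain_le_at_one:
  assumes "0 \<le> u" "u < 1/2" "0 \<le> x" "x \<le> 2 / (1 + u)"
  shows "variance_gain u x \<le> 1 - u"
proof -
  have "variance_gain u x \<le> variance_gain u 1"
    using assms variance_gain_mono_below_one[of u x 1] variance_gain_antimono_above_one[of u 1 x]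
    by (cases "x \<le> 1") auto
  then show ?thesis using assms by (simp add: variance_gain_one)
qed

lemma variance_gain_ge_min_endpoints:
  assumes "0 \<le> u" "u < 1/2" "0 \<le> a" "a \<le> x" "x \<le> b" "b \<le> 2 / (1 + u)"
  shows "min (variance_gain u a) (variance_gain u b) \<le> variance_gain u x"
  using assms variance_gain_mono_below_one[of u a x] variance_gain_antimono_above_one[of u x b]
  by (cases "x \<le> 1") auto

lemma Jhat_nesterov_at_inverse_step:
  assumes "u \<noteq> 1" "beta = u / (1 - u)" "alpha \<noteq> 0"
  shows "Jhat s alpha beta beta (1 / alpha) = s\<^sup>2"
  using assms by (simp add: Jhat_nesterov_eq_variance_gain variance_gain_one)

lemma Jhat_nesterov_bounds:
  assumes u: "0 \<le> u" "u < 1/2" and beta: "beta = u / (1 - u)"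
    and alpha: "0 < alpha" "0 < alpha * m" "alpha * m \<le> 1" "1 \<le> alpha * L" "alpha * L < 2 / (1 + u)"
    and lam: "lam \<in> {m..L}"
  shows "s\<^sup>2 \<le> Jhat s alpha beta beta lam"
    and "Jhat s alpha beta beta lam \<le> max (Jhat s alpha beta beta m) (Jhat s alpha beta beta L)"
proof -
  have x: "alpha * m \<le> alpha * lam" "alpha * lam \<le> alpha * L"
    using alpha(1) lam by (simp_all add: mult_left_mono)
  have pos: "0 < variance_gain u x" if "alpha * m \<le> x" "x \<le> alpha * L" for x
    using u alpha that by (intro variance_gain_pos) auto
  with x have g: "0 < variance_gain u (alpha * m)" "0 < variance_gain u (alpha * lam)"
      "0 < variance_gain u (alpha * L)"
    by auto
  have J: "Jhat s alpha beta beta l = s\<^sup>2 * (1 - u) / variance_gain u (alpha * l)" for l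
    using u beta by (intro Jhat_nesterov_eq_variance_gain) auto
  have c: "0 \<le> s\<^sup>2 * (1 - u)" using u by simp
  have "variance_gain u (alpha * lam) \<le> 1 - u"
    using u by (rule variance_gain_le_at_one) (use alpha x in linarith)+
  then have "s\<^sup>2 * (1 - u) / (1 - u) \<le> s\<^sup>2 * (1 - u) / variance_gain u (alpha * lam)"
    using c g u by (intro divide_left_mono) auto
  then show "s\<^sup>2 \<le> Jhat s alpha beta beta lam" using u by (simp add: J)
  have "min (variance_gain u (alpha * m)) (variance_gain u (alpha * L)) \<le> variance_gain u (alpha * lam)"
    using u alpha x by (intro variance_gain_ge_min_endpoints) auto
  then consider "variance_gain u (alpha * m) \<le> variance_gain u (alpha * lam)"
    | "variance_gain u (alpha * L) \<le> variance_gain u (alpha * lam)"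
    by linarith
  then show "Jhat s alpha beta beta lam \<le> max (Jhat s alpha beta beta m) (Jhat s alpha beta beta L)"
  proof cases
    case 1
    then have "Jhat s alpha beta beta lam \<le> Jhat s alpha beta beta m"
      unfolding J using c g by (intro divide_left_mono) auto
    then show ?thesis by simp
  next
    case 2
    then have "Jhat s alpha beta beta lam \<le> Jhat s alpha beta beta L"
      unfolding J using c g by (intro divide_left_mono) auto
    then show ?thesis by simp
  qed
qed

lemma Jhat_max_eq_at:
  assumes "x \<in> {m..L}" "\<forall>lam\<in>{m..L}. Jhat s alpha beta gamma lam \<le> Jhat s alpha beta gamma x"
  shows "Jhat_max s alpha beta gamma m L = Jhat s alpha beta gamma x"
  unfolding Jhat_max_def by (rule cSup_eq_maximum) (use assms in auto)

lemma Jhat_min_eq_at: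
  assumes "x \<in> {m..L}" "\<forall>lam\<in>{m..L}. Jhat s alpha beta gamma x \<le> Jhat s alpha beta gamma lam"
  shows "Jhat_min s alpha beta gamma m L = Jhat s alpha beta gamma x"
  unfolding Jhat_min_def by (rule cInf_eq_minimum) (use assms in auto)

lemma Jhat_nesterov_extrema:
  assumes u: "0 \<le> u" "u < 1/2" and beta: "beta = u / (1 - u)"
    and alpha: "0 < alpha" "0 < alpha * m" "alpha * m \<le> 1" "1 \<le> alpha * L" "alpha * L < 2 / (1 + u)"
    and endpoints: "Jhat s alpha beta beta L \<le> Jhat s alpha beta beta m"
  shows "\<forall>lam\<in>{m..L}. Jhat s alpha beta beta lam \<le> Jhat s alpha beta beta m"
    and "Jhat_max s alpha beta beta m L = Jhat s alpha beta beta m"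
    and "1 / alpha \<in> {m..L}"
    and "\<forall>lam\<in>{m..L}. Jhat s alpha beta beta (1 / alpha) \<le> Jhat s alpha beta beta lam"
    and "Jhat_min s alpha beta beta m L = Jhat s alpha beta beta (1 / alpha)"
    and "Jhat s alpha beta beta (1 / alpha) = s\<^sup>2"
proof -
  show upper: "\<forall>lam\<in>{m..L}. Jhat s alpha beta beta lam \<le> Jhat s alpha beta beta m"
  proof
    fix lam assume "lam \<in> {m..L}"
    from Jhat_nesterov_bounds(2)[OF u beta alpha this, where s = s] endpoints
    show "Jhat s alpha beta beta lam \<le> Jhat s alpha beta beta m" by (simp add: max_absorb1)
  qed
  moreover have "alpha * m \<le> alpha * L" using alpha by linarith
  then have "m \<le> L" using alpha by (simp add: mult_le_cancel_left_pos)
  ultimately show "Jhat_max s alpha beta beta m L = Jhat s alpha beta beta m"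
    by (intro Jhat_max_eq_at) auto
  show inv: "1 / alpha \<in> {m..L}"
    using alpha by (auto simp: field_simps)
  show J1: "Jhat s alpha beta beta (1 / alpha) = s\<^sup>2"
    using u beta alpha by (intro Jhat_nesterov_at_inverse_step) auto
  show lower: "\<forall>lam\<in>{m..L}. Jhat s alpha beta beta (1 / alpha) \<le> Jhat s alpha beta beta lam"
    using Jhat_nesterov_bounds(1)[OF u beta alpha] J1 by simp
  with inv show "Jhat_min s alpha beta beta m L = Jhat s alpha beta beta (1 / alpha)"
    by (rule Jhat_min_eq_at)
qed

text \<open>For the tuned parameters, alpha L = tuned_step c rho, and the equation defining c says
  L/m = tuned_kappa c rho.\<close>

definition tuned_kappa :: "real \<Rightarrow> real \<Rightarrow> real" where
  "tuned_kappa c rho =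
     (1 + rho) * (1 - c*rho - c\<^sup>2*(1 - rho)) / ((1 - rho) * (1 - c*rho - c\<^sup>2*(1 + rho)))"

definition tuned_step :: "real \<Rightarrow> real \<Rightarrow> real" where
  "tuned_step c rho = (1 + rho) * (1 + c - c*rho) / (1 + c)"

context
  fixes c rho :: real
  assumes c: "0 \<le> c" "c \<le> 1/2" and rho: "0 < rho" "rho < 1"
begin

lemma tuned_factors_pos:
  shows "0 < 1 - rho" "0 < 1 + rho" "0 < 1 - rho\<^sup>2" "0 < 1 + c" "0 < 1 - c"
    and "0 < 1 - c*rho" "0 < 1 + c - c*rho" "0 < 1 - c + c*rho" "0 < 1 + c + c*rho"
    and "0 < 1 - c - c*rho\<^sup>2" "0 < 1 + c - c*rho\<^sup>2" "0 < 1 - c + c*rho\<^sup>2" "0 < 1 + c + c*rho\<^sup>2"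
    and "0 < 1 - c*rho - c\<^sup>2*(1 - rho)" "0 < 1 - c*rho - c\<^sup>2*(1 + rho)"
proof -
  have cr: "0 \<le> c*rho" "c*rho \<le> c" using c rho by (simp_all add: mult_left_le)
  have crr: "0 \<le> c*rho\<^sup>2" "c*rho\<^sup>2 \<le> c" "c*rho\<^sup>2 \<le> 1/2 * rho\<^sup>2"
    using c rho by (simp_all add: mult_left_le power_le_one mult_right_mono)
  have rr: "rho\<^sup>2 < 1" using rho by (simp add: power_less_one_iff abs_less_iff)
  have "c\<^sup>2 \<le> (1/2)\<^sup>2" using c by (intro power_mono) auto
  then have "c\<^sup>2 * (1 + rho) \<le> 1/4 * (1 + rho)"
    using rho by (intro mult_right_mono) (auto simp: power2_eq_square)
  moreover have "c*rho \<le> 1/2 * rho" using c rho by (intro mult_right_mono) auto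
  ultimately have K2: "0 < 1 - c*rho - c\<^sup>2*(1 + rho)" using rho by argo
  moreover have "0 \<le> c\<^sup>2*rho" using rho by simp
  ultimately have "0 < 1 - c*rho - c\<^sup>2*(1 - rho)" by (simp add: algebra_simps)
  with K2 cr crr rr c rho show "0 < 1 - rho" "0 < 1 + rho" "0 < 1 - rho\<^sup>2" "0 < 1 + c" "0 < 1 - c"
    "0 < 1 - c*rho" "0 < 1 + c - c*rho" "0 < 1 - c + c*rho" "0 < 1 + c + c*rho"
    "0 < 1 - c - c*rho\<^sup>2" "0 < 1 + c - c*rho\<^sup>2" "0 < 1 - c + c*rho\<^sup>2" "0 < 1 + c + c*rho\<^sup>2"
    "0 < 1 - c*rho - c\<^sup>2*(1 - rho)" "0 < 1 - c*rho - c\<^sup>2*(1 + rho)"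
    by linarith+
qed

lemmas tuned_factors_nonzero = tuned_factors_pos[THEN order_less_imp_not_eq2]

lemma eq_tuned_kappa:
  assumes "kappa * (1 - rho) * (1 - c*rho - c\<^sup>2*(1 + rho)) = (1 + rho) * (1 - c*rho - c\<^sup>2*(1 - rho))"
  shows "kappa = tuned_kappa c rho"
  using assms tuned_factors_nonzero unfolding tuned_kappa_def by (simp add: eq_divide_eq mult.assoc)

lemma tuned_step_div_kappa:
  "tuned_step c rho / tuned_kappa c rho
     = (1 + c - c*rho) * (1 - rho) * (1 - c*rho - c\<^sup>2*(1 + rho)) / ((1 + c) * (1 - c*rho - c\<^sup>2*(1 - rho)))"
proof -
  define A K1 K2 where "A = 1 + c - c*rho"
    and "K1 = 1 - c*rho - c\<^sup>2*(1 - rho)" and "K2 = 1 - c*rho - c\<^sup>2*(1 + rho)"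
  have "K1 \<noteq> 0" "K2 \<noteq> 0" using tuned_factors_nonzero by (simp_all add: K1_def K2_def)
  moreover have "1 + c \<noteq> 0" "1 + rho \<noteq> 0" "1 - rho \<noteq> 0" using c rho by simp_all
  ultimately show ?thesis
    unfolding tuned_step_def tuned_kappa_def A_def[symmetric] K1_def[symmetric] K2_def[symmetric]
    by (simp add: divide_simps)
qed

lemma tuned_step_bounds:
  shows "1 \<le> tuned_step c rho" "tuned_step c rho < 2 / (1 + c*rho)"
    and "0 < tuned_step c rho / tuned_kappa c rho" "tuned_step c rho / tuned_kappa c rho \<le> 1"
proof -
  have "tuned_step c rho - 1 = rho * (1 - c*rho) / (1 + c)"
    using c unfolding tuned_step_def by (simp add: divide_simps) (simp add: algebra_simps)
  moreover have "0 \<le> rho * (1 - c*rho) / (1 + c)" using tuned_factors_pos rho by simp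
  ultimately show "1 \<le> tuned_step c rho" by linarith
  have "2 - (1 + c*rho) * tuned_step c rho = (1 - rho) * (1 - c*rho) * (1 + c + c*rho) / (1 + c)"
    using c unfolding tuned_step_def by (simp add: divide_simps) (simp add: algebra_simps)
  moreover have "0 < (1 - rho) * (1 - c*rho) * (1 + c + c*rho) / (1 + c)"
    using tuned_factors_pos by simp
  ultimately have "(1 + c*rho) * tuned_step c rho < 2" by linarith
  then show "tuned_step c rho < 2 / (1 + c*rho)"
    using tuned_factors_pos by (simp add: less_divide_eq mult.commute)
  show "0 < tuned_step c rho / tuned_kappa c rho"
    unfolding tuned_step_div_kappa using tuned_factors_pos by simp
  have "(1 + c) * (1 - c*rho - c\<^sup>2*(1 - rho)) - (1 + c - c*rho) * (1 - rho) * (1 - c*rho - c\<^sup>2*(1 + rho))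
      = (1 + c) * rho * (1 + c - c*rho) * (1 - c*rho)"
    by algebra
  moreover have "0 \<le> (1 + c) * rho * (1 + c - c*rho) * (1 - c*rho)"
    using tuned_factors_pos rho by simp
  ultimately have "(1 + c - c*rho) * (1 - rho) * (1 - c*rho - c\<^sup>2*(1 + rho)) \<le> (1 + c) * (1 - c*rho - c\<^sup>2*(1 - rho))"
    by linarith
  then show "tuned_step c rho / tuned_kappa c rho \<le> 1"
    unfolding tuned_step_div_kappa using tuned_factors_pos by (simp add: pos_divide_le_eq)
qed

lemma tuned_momentum:
  "c * rho\<^sup>2 / ((tuned_step c rho - 1) * (1 + c)) = c*rho / (1 - c*rho)"
proof -
  have "(tuned_step c rho - 1) * (1 + c) = rho * (1 - c*rho)"
    using c unfolding tuned_step_def by (simp add: field_simps)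
  then show ?thesis using rho by (simp add: power2_eq_square)
qed

lemma tuned_inverse_gain_at_L:
  "(1 - c*rho) / variance_gain (c*rho) (tuned_step c rho)
     = (1 + c)\<^sup>2 * (1 + c - c*rho\<^sup>2) / ((1 - rho\<^sup>2) * (1 + c - c*rho) * (1 + c + c*rho) * (1 + c + c*rho\<^sup>2))"
proof -
  define A B D E G where "A = 1 + c - c*rho" and "B = 1 - c*rho" and "D = 1 + c - c*rho\<^sup>2"
    and "E = 1 + c + c*rho\<^sup>2" and "G = 1 + c + c*rho"
  have nz: "A \<noteq> 0" "B \<noteq> 0" "D \<noteq> 0" "E \<noteq> 0" "G \<noteq> 0" "1 + c \<noteq> 0" "1 + rho \<noteq> 0" "1 - rho \<noteq> 0"
      "1 - rho\<^sup>2 \<noteq> 0"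
    unfolding A_def B_def D_def E_def G_def by (simp_all only: tuned_factors_nonzero not_False_eq_True)
  have F: "1 + c - c*rho*((1 + rho)*A) = B * D"
    "(1 - 2*(c*rho))*(1 + c) + c*rho*((1 + rho)*A) = B * E"
    "2*(1 + c) - (1 + c*rho)*((1 + rho)*A) = (1 - rho) * B * G"
    unfolding A_def B_def D_def E_def G_def by algebra+
  have "(1 - c*rho) / variance_gain (c*rho) (tuned_step c rho)
      = (1 - c*rho) * (1 + c)\<^sup>2 * (1 + c - c*rho*((1 + rho)*A))
        / ((1 + rho)*A * ((1 - 2*(c*rho))*(1 + c) + c*rho*((1 + rho)*A)) * (2*(1 + c) - (1 + c*rho)*((1 + rho)*A)))"
    unfolding tuned_step_def A_def by (rule variance_gain_fraction) (use nz in simp)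
  also have "\<dots> = B * (1 + c)\<^sup>2 * (B * D) / ((1 + rho) * A * (B * E) * ((1 - rho) * B * G))"
    by (simp only: F B_def)
  also have "\<dots> = (1 + c)\<^sup>2 * D / ((1 - rho\<^sup>2) * A * G * E)"
    using nz by (simp add: divide_simps) (simp add: algebra_simps power2_eq_square)
  finally show ?thesis by (simp add: A_def D_def E_def G_def)
qed

lemma tuned_inverse_gain_at_m:
  "(1 - c*rho) / variance_gain (c*rho) (tuned_step c rho / tuned_kappa c rho)
     = (1 + c) * (1 - c + c*rho\<^sup>2) * (1 - c*rho - c\<^sup>2*(1 - rho))\<^sup>2
       / ((1 - rho\<^sup>2) * (1 - c*rho - c\<^sup>2*(1 + rho)) * (1 + c - c*rho)\<^sup>2 * (1 - c - c*rho\<^sup>2) * (1 - c + c*rho))"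
proof -
  define A B H P M K1 K2 where "A = 1 + c - c*rho" and "B = 1 - c*rho" and "H = 1 - c + c*rho"
    and "P = 1 - c + c*rho\<^sup>2" and "M = 1 - c - c*rho\<^sup>2"
    and "K1 = 1 - c*rho - c\<^sup>2*(1 - rho)" and "K2 = 1 - c*rho - c\<^sup>2*(1 + rho)"
  have nz: "A \<noteq> 0" "B \<noteq> 0" "H \<noteq> 0" "P \<noteq> 0" "M \<noteq> 0" "K1 \<noteq> 0" "K2 \<noteq> 0"
      "1 + c \<noteq> 0" "1 + rho \<noteq> 0" "1 - rho \<noteq> 0" "1 - rho\<^sup>2 \<noteq> 0"
    unfolding A_def B_def H_def P_def M_def K1_def K2_def by (simp_all only: tuned_factors_nonzero not_False_eq_True)
  have F: "(1 + c) * K1 - c*rho*(A * (1 - rho) * K2) = (1 + c) * A * B * P"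
    "(1 - 2*(c*rho))*((1 + c) * K1) + c*rho*(A * (1 - rho) * K2) = (1 + c) * A * B * M"
    "2*((1 + c) * K1) - (1 + c*rho)*(A * (1 - rho) * K2) = (1 + c) * (1 + rho) * A * H * B"
    unfolding A_def B_def H_def P_def M_def K1_def K2_def by algebra+
  have "(1 - c*rho) / variance_gain (c*rho) (tuned_step c rho / tuned_kappa c rho)
      = (1 - c*rho) * ((1 + c) * K1)\<^sup>2 * ((1 + c) * K1 - c*rho*(A * (1 - rho) * K2))
        / (A * (1 - rho) * K2 * ((1 - 2*(c*rho))*((1 + c) * K1) + c*rho*(A * (1 - rho) * K2))
           * (2*((1 + c) * K1) - (1 + c*rho)*(A * (1 - rho) * K2)))"
    unfolding tuned_step_div_kappa A_def K1_def K2_def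
    by (rule variance_gain_fraction) (use tuned_factors_nonzero in simp)
  also have "\<dots> = B * ((1 + c) * K1)\<^sup>2 * ((1 + c) * A * B * P)
        / (A * (1 - rho) * K2 * ((1 + c) * A * B * M) * ((1 + c) * (1 + rho) * A * H * B))"
    by (simp only: F B_def)
  also have "\<dots> = (1 + c) * P * K1\<^sup>2 / ((1 - rho\<^sup>2) * K2 * A\<^sup>2 * M * H)"
    using nz by (simp add: divide_simps) (simp add: algebra_simps power2_eq_square)
  finally show ?thesis by (simp add: A_def H_def P_def M_def K1_def K2_def)
qed

lemma tuned_inverse_gain_at_L_le_at_m:
  "(1 + c)\<^sup>2 * (1 + c - c*rho\<^sup>2) / ((1 - rho\<^sup>2) * (1 + c - c*rho) * (1 + c + c*rho) * (1 + c + c*rho\<^sup>2))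
     \<le> (1 + c) * (1 - c + c*rho\<^sup>2) * (1 - c*rho - c\<^sup>2*(1 - rho))\<^sup>2
       / ((1 - rho\<^sup>2) * (1 - c*rho - c\<^sup>2*(1 + rho)) * (1 + c - c*rho)\<^sup>2 * (1 - c - c*rho\<^sup>2) * (1 - c + c*rho))"
proof -
  define Q where "Q = 1 - c\<^sup>2 - c\<^sup>2*rho\<^sup>2 - c^4*rho\<^sup>2 + c^4*rho^4"
  have "c * c \<le> 1/2 * (1/2)" using c by (intro mult_mono) auto
  then have "c\<^sup>2 \<le> 1/4" by (simp add: power2_eq_square)
  moreover have "rho\<^sup>2 \<le> 1" using rho by (simp add: power_le_one)
  ultimately have "c\<^sup>2 * (1 + rho\<^sup>2 + c\<^sup>2*rho\<^sup>2) \<le> 1/4 * (1 + 1 + 1/4 * 1)"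
    by (intro mult_mono add_mono) auto
  moreover have "Q = 1 - c\<^sup>2 * (1 + rho\<^sup>2 + c\<^sup>2*rho\<^sup>2) + (c*rho)^4"
    unfolding Q_def by algebra
  moreover have "0 \<le> (c*rho)^4" by simp
  ultimately have "0 < Q" by argo
  define x y w z where "x = (1 + c)\<^sup>2 * (1 + c - c*rho\<^sup>2)"
    and "y = (1 - rho\<^sup>2) * (1 + c - c*rho) * (1 + c + c*rho) * (1 + c + c*rho\<^sup>2)"
    and "w = (1 + c) * (1 - c + c*rho\<^sup>2) * (1 - c*rho - c\<^sup>2*(1 - rho))\<^sup>2"
    and "z = (1 - rho\<^sup>2) * (1 - c*rho - c\<^sup>2*(1 + rho)) * (1 + c - c*rho)\<^sup>2 * (1 - c - c*rho\<^sup>2) * (1 - c + c*rho)"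
  have "w * y - x * z = 4 * c * rho\<^sup>2 * (1 + c) * (1 - rho\<^sup>2) * (1 + c - c*rho)\<^sup>2 * Q"
    unfolding x_def y_def w_def z_def Q_def by algebra
  moreover have "0 \<le> 4 * c * rho\<^sup>2 * (1 + c) * (1 - rho\<^sup>2) * (1 + c - c*rho)\<^sup>2 * Q"
    using \<open>0 < Q\<close> tuned_factors_pos c by simp
  ultimately have "x * z - w * y \<le> 0" by linarith
  moreover have "0 < y * z" using tuned_factors_pos by (simp add: y_def z_def)
  ultimately have "(x * z - w * y) / (y * z) \<le> 0" by (rule divide_nonpos_pos)
  moreover have "y \<noteq> 0" "z \<noteq> 0" using tuned_factors_nonzero by (simp_all add: y_def z_def)
  ultimately have "x / y \<le> w / z" by (simp add: frac_le_eq)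
  then show ?thesis by (simp only: x_def y_def w_def z_def)
qed

lemma tuned_inverse_gain_at_m_via_r:
  fixes r :: real
  assumes "r = (1 + c) * (1 - c + c*rho) / ((1 - c) * (1 + c - c*rho))"
  shows "(1 + c) * (1 - c + c*rho\<^sup>2) * (1 - c*rho - c\<^sup>2*(1 - rho))\<^sup>2
       / ((1 - rho\<^sup>2) * (1 - c*rho - c\<^sup>2*(1 + rho)) * (1 + c - c*rho)\<^sup>2 * (1 - c - c*rho\<^sup>2) * (1 - c + c*rho))
     = (1 - c)\<^sup>2 * (r * tuned_kappa c rho + 1) / (2 * (1 - c - c*rho\<^sup>2) * (1 + rho) * (1 - c + c*rho))"
proof -
  define A H P M K1 K2 where "A = 1 + c - c*rho" and "H = 1 - c + c*rho"
    and "P = 1 - c + c*rho\<^sup>2" and "M = 1 - c - c*rho\<^sup>2"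
    and "K1 = 1 - c*rho - c\<^sup>2*(1 - rho)" and "K2 = 1 - c*rho - c\<^sup>2*(1 + rho)"
  have nz: "A \<noteq> 0" "H \<noteq> 0" "P \<noteq> 0" "M \<noteq> 0" "K1 \<noteq> 0" "K2 \<noteq> 0"
      "1 + c \<noteq> 0" "1 - c \<noteq> 0" "1 + rho \<noteq> 0" "1 - rho \<noteq> 0" "1 - rho\<^sup>2 \<noteq> 0"
    unfolding A_def H_def P_def M_def K1_def K2_def by (simp_all only: tuned_factors_nonzero not_False_eq_True)
  define N where "N = (1 + c) * H * (1 + rho) * K1 + (1 - c) * A * (1 - rho) * K2"
  have rk: "r * tuned_kappa c rho + 1 = N / ((1 - c) * A * (1 - rho) * K2)"
    unfolding assms tuned_kappa_def A_def[symmetric] H_def[symmetric] K1_def[symmetric] K2_def[symmetric]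
    using nz by (simp add: divide_simps N_def)
  have "(1 - c) * A * N = 2 * (1 + c) * P * K1\<^sup>2"
    unfolding N_def A_def H_def P_def K1_def K2_def by algebra
  then have N: "N = 2 * (1 + c) * P * K1\<^sup>2 / ((1 - c) * A)"
    using nz by (simp add: eq_divide_eq ac_simps)
  show ?thesis
    unfolding rk N A_def[symmetric] H_def[symmetric] P_def[symmetric] M_def[symmetric]
      K1_def[symmetric] K2_def[symmetric]
    using nz by (simp add: divide_simps) (simp add: algebra_simps power2_eq_square)
qed

lemma tuned_r_bounds:
  assumes "r = (1 + c) * (1 - c + c*rho) / ((1 - c) * (1 + c - c*rho))"
  shows "1 \<le> r" "r \<le> 3"
proof -
  have den: "0 < (1 - c) * (1 + c - c*rho)" using tuned_factors_pos by simp
  have "(1 + c) * (1 - c + c*rho) - (1 - c) * (1 + c - c*rho) = 2 * (c*rho)"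
    by (simp add: algebra_simps)
  moreover have "0 \<le> c*rho" using c rho by simp
  ultimately have "(1 - c) * (1 + c - c*rho) \<le> (1 + c) * (1 - c + c*rho)" by linarith
  with den show "1 \<le> r" unfolding assms by (simp add: le_divide_eq)
  have "3 * ((1 - c) * (1 + c - c*rho)) - (1 + c) * (1 - c + c*rho)
      = 2 * (1 - c*rho - c\<^sup>2*(1 - rho)) - 2 * (c*rho)"
    by algebra
  moreover have "c*rho \<le> 1/2 * rho" using c rho by (intro mult_right_mono) auto
  moreover have "c * c \<le> 1/2 * (1/2)" using c by (intro mult_mono) auto
  then have "c\<^sup>2*(1 - rho) \<le> 1/4 * (1 - rho)" using rho by (intro mult_right_mono) (auto simp: power2_eq_square)
  ultimately have "(1 + c) * (1 - c + c*rho) \<le> 3 * ((1 - c) * (1 + c - c*rho))" using rho by argo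
  with den show "r \<le> 3" unfolding assms by (simp add: divide_le_eq)
qed

end

theorem lemma6:
  fixes m L rho c sigma_w :: real
  assumes hm: "0 < m" and hmL: "m \<le> L"
    and hrho: "0 < rho" "rho < 1"
    and hrho_lo: "sqrt (3 * (L / m) + 1) / 2 \<le> 1 / (1 - rho)"
    and hrho_hi: "1 / (1 - rho) \<le> (L / m + 1) / 2"
    and hc: "0 \<le> c" "c \<le> 1 / 2"
    and hc_eq: "(L / m) * (1 - rho) * (1 - c * rho - c\<^sup>2 * (1 + rho))
               = (1 + rho) * (1 - c * rho - c\<^sup>2 * (1 - rho))"
    and hsig: "0 \<le> sigma_w"
  defines "alpha \<equiv> (1 + rho) * (1 + c - c * rho) / (L * (1 + c))"
  defines "beta \<equiv> c * rho\<^sup>2 / ((alpha * L - 1) * (1 + c))"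
  defines "gamma \<equiv> beta"
  defines "r \<equiv> (1 + c) * (1 - c + c * rho) / ((1 - c) * (1 + c - c * rho))"
  shows "(\<forall>lam\<in>{m..L}. Jhat sigma_w alpha beta gamma lam \<le> Jhat sigma_w alpha beta gamma m)
    \<and> Jhat_max sigma_w alpha beta gamma m L = Jhat sigma_w alpha beta gamma m
    \<and> Jhat sigma_w alpha beta gamma m =
        sigma_w\<^sup>2 * (1 - c)\<^sup>2 * (r * (L / m) + 1) /
        (2 * (1 - c - c * rho\<^sup>2) * (1 + rho) * (1 - c + c * rho))
    \<and> Jhat sigma_w alpha beta gamma L \<le> Jhat sigma_w alpha beta gamma m
    \<and> Jhat sigma_w alpha beta gamma L =
        sigma_w\<^sup>2 * (1 + c)\<^sup>2 * (1 + c - c * rho\<^sup>2) /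
        ((1 - rho\<^sup>2) * (1 + c - c * rho) * (1 + c + c * rho) * (1 + c + c * rho\<^sup>2))
    \<and> 1 / alpha \<in> {m..L}
    \<and> (\<forall>lam\<in>{m..L}. Jhat sigma_w alpha beta gamma (1 / alpha) \<le> Jhat sigma_w alpha beta gamma lam)
    \<and> Jhat_min sigma_w alpha beta gamma m L = Jhat sigma_w alpha beta gamma (1 / alpha)
    \<and> Jhat sigma_w alpha beta gamma (1 / alpha) = sigma_w\<^sup>2
    \<and> 1 \<le> r \<and> r \<le> 3"
proof -
  \<comment> \<open>hrho_lo and hrho_hi only guarantee that a root c in [0, 1/2] exists\<close>
  define u where "u = c * rho"
  have r: "r = (1 + c) * (1 - c + c*rho) / ((1 - c) * (1 + c - c*rho))" by (simp add: r_def)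
  have "0 < L" using hm hmL by linarith
  have kappa: "L / m = tuned_kappa c rho" using eq_tuned_kappa[OF hc hrho hc_eq] .
  have aL: "alpha * L = tuned_step c rho"
    using \<open>0 < L\<close> unfolding alpha_def tuned_step_def by simp
  have am: "alpha * m = tuned_step c rho / tuned_kappa c rho"
    using hm \<open>0 < L\<close> unfolding kappa[symmetric] aL[symmetric] by simp
  have beta: "beta = u / (1 - u)"
    unfolding beta_def aL u_def by (rule tuned_momentum[OF hc hrho])
  have "c * rho \<le> 1/2 * rho" using hc hrho by (intro mult_right_mono) auto
  then have u: "0 \<le> u" "u < 1/2" using hc hrho unfolding u_def by (simp, linarith)
  note step = tuned_step_bounds[OF hc hrho]
  have "0 < alpha * L" using step(1) aL by simp
  with \<open>0 < L\<close> have "0 < alpha" by (simp add: zero_less_mult_iff)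
  then have alpha: "0 < alpha" "0 < alpha * m" "alpha * m \<le> 1" "1 \<le> alpha * L" "alpha * L < 2 / (1 + u)"
    using step \<open>0 < L\<close> unfolding am aL u_def by (auto simp: zero_less_mult_iff)
  have J: "Jhat sigma_w alpha beta beta lam = sigma_w\<^sup>2 * ((1 - u) / variance_gain u (alpha * lam))" for lam
    using Jhat_nesterov_eq_variance_gain[of u beta] beta u by simp
  have JL: "Jhat sigma_w alpha beta beta L = sigma_w\<^sup>2 * (1 + c)\<^sup>2 * (1 + c - c * rho\<^sup>2) /
        ((1 - rho\<^sup>2) * (1 + c - c * rho) * (1 + c + c * rho) * (1 + c + c * rho\<^sup>2))"
    unfolding J aL u_def tuned_inverse_gain_at_L[OF hc hrho] by simp
  have Jm: "Jhat sigma_w alpha beta beta m = sigma_w\<^sup>2 * (1 - c)\<^sup>2 * (r * (L / m) + 1) /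
        (2 * (1 - c - c * rho\<^sup>2) * (1 + rho) * (1 - c + c * rho))"
    unfolding J am u_def tuned_inverse_gain_at_m[OF hc hrho] tuned_inverse_gain_at_m_via_r[OF hc hrho r] kappa
    by simp
  have endpoints: "Jhat sigma_w alpha beta beta L \<le> Jhat sigma_w alpha beta beta m"
    unfolding J am aL u_def tuned_inverse_gain_at_m[OF hc hrho] tuned_inverse_gain_at_L[OF hc hrho]
    using tuned_inverse_gain_at_L_le_at_m[OF hc hrho] by (rule mult_left_mono) simp
  show ?thesis
    unfolding gamma_def
    using Jhat_nesterov_extrema[OF u beta alpha endpoints] endpoints JL Jm tuned_r_bounds[OF hc hrho r]
    by blast
qed

end
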